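(* Let $T$ be a triangulation of the oriented 2-sphere (a simplicial complex), $R$ its vertex–edge incidence matrix ($R_{v,e}=1$ if $v\in e$, else $0$), and $E$ the edge–edge matrix defined below. Then $R\cdot E=0$.
   Context: $E=(E_{e,e'})_{e,e'\in\mathcal E(T)}$: if $e\neq e'$ lie in a common face whose edges in positive cyclic order are $\{a,b\},\{b,c\},\{c,a\}$, then $E_{e,e'}=-1$ if $e'$ immediately follows $e$ and $+1$ if $e'$ immediately precedes $e$; otherwise $E_{e,e'}=0$. *)

theory Defs
  imports "HOL-Analysis.Analysis"
begin

definition simplicial_complex :: "'v set set \<Rightarrow> bool" where
  "simplicial_complex K \<longleftrightarrow> K \<noteq> {} \<and>
     (\<forall>\<sigma>\<in>K. \<sigma> \<noteq> {} \<and> finite \<sigma> \<and> (\<forall>\<tau>. \<tau> \<subseteq> \<sigma> \<and> \<tau> \<noteq> {} \<longrightarrow> \<tau> \<in> K))"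

definition vertices_of :: "'v set set \<Rightarrow> 'v set" where
  "vertices_of K = \<Union>K"

definition edges_of :: "'v set set \<Rightarrow> 'v set set" where
  "edges_of K = {\<sigma>\<in>K. card \<sigma> = 2}"

definition faces_of :: "'v set set \<Rightarrow> 'v set set" where
  "faces_of K = {\<sigma>\<in>K. card \<sigma> = 3}"

definition realization :: "('v::finite) set set \<Rightarrow> (real ^ 'v) set" where
  "realization K = (\<Union>\<sigma>\<in>K. convex hull ((\<lambda>v. axis v 1) ` \<sigma>))"

definition sphere_triangulation :: "('v::finite) set set \<Rightarrow> bool" where
  "sphere_triangulation K \<longleftrightarrow> simplicial_complex K \<and>
     realization K homeomorphic sphere (0::real^3) 1"

text \<open>An orientation: for every face F, \<open>nx F\<close> is the successor map of the positive
  cyclic order of F (a fixed-point free permutation of the 3-set F, i.e. a 3-cycle);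
  coherence (orientation of the sphere): every oriented edge (a,b) of T occurs, as
  a successor pair, in exactly one face.\<close>
definition oriented :: "'v set set \<Rightarrow> ('v set \<Rightarrow> 'v \<Rightarrow> 'v) \<Rightarrow> bool" where
  "oriented K nx \<longleftrightarrow>
     (\<forall>F\<in>faces_of K. nx F ` F \<subseteq> F \<and> inj_on (nx F) F \<and> (\<forall>a\<in>F. nx F a \<noteq> a)) \<and>
     (\<forall>a b. {a, b} \<in> edges_of K \<and> a \<noteq> b \<longrightarrow> (\<exists>!F. F \<in> faces_of K \<and> a \<in> F \<and> nx F a = b))"

definition incR :: "'v \<Rightarrow> 'v set \<Rightarrow> int" where
  "incR v e = (if v \<in> e then 1 else 0)"

text \<open>In a face with positive cyclic order a, b, c the edges in
  positive cyclic order are {a,b},{b,c},{c,a}; e' immediately follows e if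
  e = {a, nx a} and e' = {nx a, nx (nx a)}; e' immediately precedes e if
  e = {a, nx a} and e' = {nx (nx a), a}.\<close>
definition edgeE :: "'v set set \<Rightarrow> ('v set \<Rightarrow> 'v \<Rightarrow> 'v) \<Rightarrow> 'v set \<Rightarrow> 'v set \<Rightarrow> int" where
  "edgeE K nx e e' =
     (if e \<noteq> e' \<and> (\<exists>F\<in>faces_of K. \<exists>a\<in>F. e = {a, nx F a} \<and> e' = {nx F a, nx F (nx F a)})
      then -1
      else if e \<noteq> e' \<and> (\<exists>F\<in>faces_of K. \<exists>a\<in>F. e = {a, nx F a} \<and> e' = {nx F (nx F a), a})
      then 1 else 0)"

end

theory Submission
  imports Defs
begin

text \<open>Only the combinatorics of the orientation enters: for an edge \<open>e' = {x, y}\<close>, the oriented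
  edges \<open>(x, y)\<close> and \<open>(y, x)\<close> lie in the positively oriented faces \<open>{x, y, z}\<close> and
  \<open>{y, x, w}\<close> with \<open>z \<noteq> w\<close>. The column of \<open>E\<close> at \<open>e'\<close> is therefore \<open>-1\<close> at \<open>{z, x}\<close> and
  \<open>{w, y}\<close>, \<open>+1\<close> at \<open>{y, z}\<close> and \<open>{x, w}\<close>, and \<open>0\<close> elsewhere; each of \<open>x, y, z, w\<close> lies in
  exactly one edge of either sign, so every row of \<open>R\<close> annihilates this column.\<close>

lemma fixpoint_free_permutation_of_3_set:
  assumes "card F = 3" "f ` F \<subseteq> F" "inj_on f F" "\<forall>a\<in>F. f a \<noteq> a" "a \<in> F"
  shows "f a \<noteq> a" "f (f a) \<noteq> a" "f (f a) \<noteq> f a"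
    and "F = {a, f a, f (f a)}" "f (f (f a)) = a"
proof -
  have fin: "finite F" using assms(1) card.infinite by fastforce
  have fa: "f a \<in> F" "f a \<noteq> a" and ffa: "f (f a) \<in> F" "f (f a) \<noteq> f a"
    using assms by auto
  have three_elements: "F = {a, b, c}" if "b \<in> F" "c \<in> F" "card {a, b, c} = 3" for b c
    using that fin assms(1,5) by (metis card_subset_eq empty_subsetI insert_subset)
  have ffa_ne: "f (f a) \<noteq> a"
  proof
    assume ffa_a: "f (f a) = a"
    have "card {a, f a} = 2" using fa by simp
    then have "{a, f a} \<noteq> F" using assms(1) by auto
    then obtain c where c: "c \<in> F" "c \<notin> {a, f a}" using assms(5) fa by blast
    have "card {a, f a, c} = 3" using fa c by auto
    then have "F = {a, f a, c}" using three_elements fa(1) c(1) by simp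
    moreover have "f c \<in> F" "f c \<noteq> c" using assms c by auto
    moreover have "f c \<noteq> f a" "f c \<noteq> a"
      using assms(3,5) c fa ffa_a by (metis inj_on_def insertCI)+
    ultimately show False by auto
  qed
  have F: "F = {a, f a, f (f a)}" using three_elements fa ffa ffa_ne by simp
  have "f (f (f a)) \<in> F" "f (f (f a)) \<noteq> f (f a)" using assms ffa by auto
  moreover have "f (f (f a)) \<noteq> f a" using assms(3,5) fa ffa ffa_ne by (metis inj_on_def)
  ultimately have "f (f (f a)) = a" using F by auto
  then show "f a \<noteq> a" "f (f a) \<noteq> a" "f (f a) \<noteq> f a" "F = {a, f a, f (f a)}" "f (f (f a)) = a"
    using fa ffa ffa_ne F by auto
qed

locale oriented_complex =
  fixes K :: "'v set set" and nx :: "'v set \<Rightarrow> 'v \<Rightarrow> 'v"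
  assumes complex: "simplicial_complex K"
    and orientation: "oriented K nx"
begin

lemma face_cycle:
  assumes "F \<in> faces_of K" "a \<in> F"
  shows "nx F a \<noteq> a" "nx F (nx F a) \<noteq> a" "nx F (nx F a) \<noteq> nx F a"
    and "F = {a, nx F a, nx F (nx F a)}" "nx F (nx F (nx F a)) = a" "nx F a \<in> F"
proof -
  have "card F = 3" using assms(1) by (simp add: faces_of_def)
  moreover have "nx F ` F \<subseteq> F" "inj_on (nx F) F" "\<forall>a\<in>F. nx F a \<noteq> a"
    using assms(1) orientation by (simp_all add: oriented_def)
  ultimately show "nx F a \<noteq> a" "nx F (nx F a) \<noteq> a" "nx F (nx F a) \<noteq> nx F a"
    and "F = {a, nx F a, nx F (nx F a)}" "nx F (nx F (nx F a)) = a"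
    using fixpoint_free_permutation_of_3_set[OF _ _ _ _ assms(2)] by simp_all
  show "nx F a \<in> F" using \<open>nx F ` F \<subseteq> F\<close> assms(2) by blast
qed

lemma face_edge:
  assumes "F \<in> faces_of K" "a \<in> F" "b \<in> F" "a \<noteq> b"
  shows "{a, b} \<in> edges_of K"
proof -
  have closed: "\<tau> \<in> K" if "\<sigma> \<in> K" "\<tau> \<subseteq> \<sigma>" "\<tau> \<noteq> {}" for \<sigma> \<tau>
    using complex that unfolding simplicial_complex_def by metis
  have "{a, b} \<in> K"
    by (rule closed[of F]) (use assms(1-3) in \<open>simp_all add: faces_of_def\<close>)
  then show ?thesis using assms(4) by (simp add: edges_of_def)
qed

text \<open>For an edge \<open>{a, b}\<close> with \<open>a \<noteq> b\<close>: the unique face in which \<open>b\<close> follows \<open>a\<close>, and its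
  third vertex. For other arguments \<open>THE\<close> yields an unspecified value.\<close>

definition left_face :: "'v \<Rightarrow> 'v \<Rightarrow> 'v set" where
  "left_face a b = (THE F. F \<in> faces_of K \<and> a \<in> F \<and> nx F a = b)"

definition apex :: "'v \<Rightarrow> 'v \<Rightarrow> 'v" where
  "apex a b = nx (left_face a b) b"

lemma left_face_unique:
  assumes "F \<in> faces_of K" "a \<in> F" "nx F a = b"
  shows "left_face a b = F"
proof -
  have "b \<in> F" "a \<noteq> b" using face_cycle(1,4)[OF assms(1,2)] assms(3) by auto
  then have "{a, b} \<in> edges_of K" using face_edge assms(1,2) by blast
  then have "\<exists>!F. F \<in> faces_of K \<and> a \<in> F \<and> nx F a = b"
    using \<open>a \<noteq> b\<close> orientation by (simp add: oriented_def)
  then show ?thesis unfolding left_face_def by (rule the1_equality) (use assms in simp)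
qed

lemma left_face_carries_edge:
  assumes "{a, b} \<in> edges_of K" "a \<noteq> b"
  shows "left_face a b \<in> faces_of K" "a \<in> left_face a b" "nx (left_face a b) a = b"
proof -
  have "\<exists>!F. F \<in> faces_of K \<and> a \<in> F \<and> nx F a = b"
    using assms orientation by (simp add: oriented_def)
  then obtain F where "F \<in> faces_of K" "a \<in> F" "nx F a = b" by blast
  then show "left_face a b \<in> faces_of K" "a \<in> left_face a b" "nx (left_face a b) a = b"
    using left_face_unique by auto
qed

lemma left_face_apex:
  assumes "{a, b} \<in> edges_of K" "a \<noteq> b"
  shows "left_face a b = {a, b, apex a b}" "apex a b \<noteq> a" "apex a b \<noteq> b"
    and "nx (left_face a b) (apex a b) = a"
  using face_cycle[OF left_face_carries_edge(1,2)[OF assms]] left_face_carries_edge(3)[OF assms]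
  by (simp_all add: apex_def)

lemma apex_predecessor:
  assumes "F \<in> faces_of K" "a \<in> F" "nx F a = x" "nx F x = y"
  shows "apex x y = a"
proof -
  have "x \<in> F" using assms face_cycle(4) by blast
  then have "left_face x y = F" using assms left_face_unique by blast
  then show ?thesis using face_cycle(5)[OF assms(1,2)] assms(3,4) by (simp add: apex_def)
qed

lemma apex_swap_distinct:
  assumes "{x, y} \<in> edges_of K" "x \<noteq> y"
  shows "apex x y \<noteq> apex y x"
proof
  have yx: "{y, x} \<in> edges_of K" using assms by (simp add: insert_commute)
  assume "apex x y = apex y x"
  then have "left_face x y = left_face y x"
    using left_face_apex(1)[OF assms] left_face_apex(1)[OF yx] by auto
  then have "nx (left_face x y) y = x" using left_face_carries_edge(3)[OF yx] assms(2) by simp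
  then show False using left_face_apex(2)[OF assms] by (simp add: apex_def)
qed

lemma apex_edges:
  assumes "{a, b} \<in> edges_of K" "a \<noteq> b"
  shows "{apex a b, a} \<in> edges_of K" "{b, apex a b} \<in> edges_of K"
  using face_edge[OF left_face_carries_edge(1)[OF assms]] left_face_apex[OF assms] by auto

lemma left_face_cycle:
  assumes "{a, b} \<in> edges_of K" "a \<noteq> b"
  shows "apex a b \<in> left_face a b" "nx (left_face a b) (apex a b) = a"
    "nx (left_face a b) a = b" "nx (left_face a b) b = apex a b"
  using left_face_apex[OF assms] left_face_carries_edge(3)[OF assms] by (auto simp: apex_def)

lemma edge_followed_by_iff:
  assumes "{x, y} \<in> edges_of K" "x \<noteq> y"
  shows "(\<exists>F\<in>faces_of K. \<exists>a\<in>F. e = {a, nx F a} \<and> {x, y} = {nx F a, nx F (nx F a)})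
    \<longleftrightarrow> e = {apex x y, x} \<or> e = {apex y x, y}"
proof
  assume "\<exists>F\<in>faces_of K. \<exists>a\<in>F. e = {a, nx F a} \<and> {x, y} = {nx F a, nx F (nx F a)}"
  then obtain F a where F: "F \<in> faces_of K" "a \<in> F" and e: "e = {a, nx F a}"
    and "{x, y} = {nx F a, nx F (nx F a)}" by blast
  then consider "nx F a = x" "nx F x = y" | "nx F a = y" "nx F y = x"
    by (auto simp: doubleton_eq_iff)
  then show "e = {apex x y, x} \<or> e = {apex y x, y}"
    by cases (use F e apex_predecessor in auto)
next
  have witness:
    "\<exists>F\<in>faces_of K. \<exists>a\<in>F. {apex u v, u} = {a, nx F a} \<and> {u, v} = {nx F a, nx F (nx F a)}"
    if "{u, v} \<in> edges_of K" "u \<noteq> v" for u v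
    by (intro bexI[where x = "left_face u v"] bexI[where x = "apex u v"])
      (use left_face_carries_edge(1)[OF that] left_face_cycle[OF that] in simp_all)
  have "{y, x} = {x, y}" "{y, x} \<in> edges_of K" using assms(1) by (simp_all add: insert_commute)
  then show "e = {apex x y, x} \<or> e = {apex y x, y} \<Longrightarrow>
      \<exists>F\<in>faces_of K. \<exists>a\<in>F. e = {a, nx F a} \<and> {x, y} = {nx F a, nx F (nx F a)}"
    using witness[OF assms] witness[of y x] assms(2) by auto
qed

lemma edge_preceded_by_iff:
  assumes "{x, y} \<in> edges_of K" "x \<noteq> y"
  shows "(\<exists>F\<in>faces_of K. \<exists>a\<in>F. e = {a, nx F a} \<and> {x, y} = {nx F (nx F a), a})
    \<longleftrightarrow> e = {y, apex x y} \<or> e = {x, apex y x}"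
proof
  assume "\<exists>F\<in>faces_of K. \<exists>a\<in>F. e = {a, nx F a} \<and> {x, y} = {nx F (nx F a), a}"
  then obtain F a where F: "F \<in> faces_of K" "a \<in> F" and e: "e = {a, nx F a}"
    and "{x, y} = {nx F (nx F a), a}" by blast
  then consider "a = y" "nx F (nx F y) = x" | "a = x" "nx F (nx F x) = y"
    by (auto simp: doubleton_eq_iff)
  then show "e = {y, apex x y} \<or> e = {x, apex y x}"
  proof cases
    case 1
    then have "apex x y = nx F y"
      using F face_cycle(1,5,6)[OF F] by (intro apex_predecessor) auto
    then show ?thesis using 1 e by simp
  next
    case 2
    then have "apex y x = nx F x"
      using F face_cycle(1,5,6)[OF F] by (intro apex_predecessor) auto
    then show ?thesis using 2 e by simp
  qed
next
  have witness:
    "\<exists>F\<in>faces_of K. \<exists>a\<in>F. {v, apex u v} = {a, nx F a} \<and> {u, v} = {nx F (nx F a), a}"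
    if "{u, v} \<in> edges_of K" "u \<noteq> v" for u v
    by (intro bexI[where x = "left_face u v"] bexI[where x = "v"])
      (use left_face_carries_edge(1)[OF that] left_face_cycle[OF that] left_face_apex(1)[OF that]
        in auto)
  have "{y, x} = {x, y}" "{y, x} \<in> edges_of K" using assms(1) by (simp_all add: insert_commute)
  then show "e = {y, apex x y} \<or> e = {x, apex y x} \<Longrightarrow>
      \<exists>F\<in>faces_of K. \<exists>a\<in>F. e = {a, nx F a} \<and> {x, y} = {nx F (nx F a), a}"
    using witness[OF assms] witness[of y x] assms(2) by auto
qed

lemma edgeE_column:
  assumes "{x, y} \<in> edges_of K" "x \<noteq> y"
  shows "edgeE K nx e {x, y} =
    (if e = {apex x y, x} \<or> e = {apex y x, y} then -1
     else if e = {y, apex x y} \<or> e = {x, apex y x} then 1 else 0)"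
proof -
  have yx: "{y, x} \<in> edges_of K" using assms(1) by (simp add: insert_commute)
  have "{apex x y, x} \<noteq> {x, y}" "{apex y x, y} \<noteq> {x, y}"
    "{y, apex x y} \<noteq> {x, y}" "{x, apex y x} \<noteq> {x, y}"
    using left_face_apex(2,3)[OF assms] left_face_apex(2,3)[OF yx] assms(2)
    by (auto simp: doubleton_eq_iff)
  then show ?thesis
    unfolding edgeE_def edge_followed_by_iff[OF assms] edge_preceded_by_iff[OF assms] by auto
qed

lemma incidence_edgeE_column_sum:
  assumes "finite (edges_of K)" "{x, y} \<in> edges_of K" "x \<noteq> y"
  shows "(\<Sum>e\<in>edges_of K. incR v e * edgeE K nx e {x, y}) = 0"
proof -
  have yx: "{y, x} \<in> edges_of K" using assms(2) by (simp add: insert_commute)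
  define z w where "z = apex x y" and "w = apex y x"
  have distinct: "z \<noteq> x" "z \<noteq> y" "w \<noteq> x" "w \<noteq> y" "z \<noteq> w"
    using left_face_apex(2,3)[OF assms(2,3)] left_face_apex(2,3)[OF yx]
      apex_swap_distinct[OF assms(2,3)] assms(3)
    unfolding z_def w_def by auto
  have edges: "{z, x} \<in> edges_of K" "{y, z} \<in> edges_of K"
    "{w, y} \<in> edges_of K" "{x, w} \<in> edges_of K"
    using apex_edges[OF assms(2,3)] apex_edges[OF yx] assms(3) unfolding z_def w_def by auto
  have "incR v e * edgeE K nx e {x, y} =
      (if e = {y, z} then incR v e else 0) + (if e = {x, w} then incR v e else 0)
    - (if e = {z, x} then incR v e else 0) - (if e = {w, y} then incR v e else 0)" for e
    using distinct assms(3)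
    by (auto simp: edgeE_column[OF assms(2,3)] z_def[symmetric] w_def[symmetric] doubleton_eq_iff)
  then have "(\<Sum>e\<in>edges_of K. incR v e * edgeE K nx e {x, y}) =
      incR v {y, z} + incR v {x, w} - incR v {z, x} - incR v {w, y}"
    using assms(1) edges by (simp add: sum.distrib sum_subtractf)
  also have "\<dots> = 0" using distinct by (auto simp: incR_def)
  finally show ?thesis .
qed

end

theorem lemma1:
  fixes K :: "('v::finite) set set" and nx :: "'v set \<Rightarrow> 'v \<Rightarrow> 'v"
  assumes "sphere_triangulation K"
    and "oriented K nx"
    and "v \<in> vertices_of K"
    and "e' \<in> edges_of K"
  shows "(\<Sum>e\<in>edges_of K. incR v e * edgeE K nx e e') = 0"
proof -
  interpret oriented_complex K nx
    using assms(1,2) by (simp add: oriented_complex_def sphere_triangulation_def)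
  obtain x y where "e' = {x, y}" "x \<noteq> y"
    using assms(4) by (auto simp: edges_of_def card_2_iff)
  then show ?thesis using assms(4) incidence_edgeE_column_sum by simp
qed

end
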